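(* For every $n\ge1$, $$\sum_{\deg\tau=n}\frac{B_\tau}{\tau!}=\frac{(-1)^{n+1}}{n},$$ where the sum runs over all non-associative monomials $\tau$ in one variable $x$ of degree $n$ (equivalently, rooted binary plane trees with $n$ leaves).
   Context: Bernoulli numbers $B_k$ are defined by $B_0=1$ and $\sum_{k=0}^{n-1}\frac{B_k}{k!(n-k)!}=0$ for $n\ge2$ (so $B_1=-1/2$). For a non-associative monomial $\tau$ in $x$: if $\tau=x$ set $B_\tau=1$, $\tau!=1$; otherwise $\tau$ can be written uniquely as $(\cdots((x\tau_1)\tau_2)\cdots)\tau_k$ with $k\ge1$ and monomials $\tau_1,\dots,\tau_k$, and one sets $B_\tau=B_k B_{\tau_1}\cdots B_{\tau_k}$ and $\tau!=k!\,\tau_1!\cdots\tau_k!$. The degree of $\tau$ is the number of occurrences of $x$. *)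

theory Defs
  imports Complex_Main
begin

text \<open>Non-associative monomials in one variable x: X is x, Mul a b is the product (a b).\<close>
datatype nam = X | Mul nam nam

fun deg :: "nam \<Rightarrow> nat" where
  "deg X = 1"
| "deg (Mul a b) = deg a + deg b"

text \<open>For tau = (...((x tau_1) tau_2)...) tau_k, args tau = [tau_1,...,tau_k].\<close>
fun args :: "nam \<Rightarrow> nam list" where
  "args X = []"
| "args (Mul a b) = args a @ [b]"

text \<open>Bernoulli numbers: B_0 = 1, sum_{k<n} B_k/(k!(n-k)!) = 0 for n >= 2, so B_1 = -1/2.
  Equivalently B_n = - n! * sum_{k<n} B_k / (k! (n+1-k)!) for n >= 1.\<close>
fun bern :: "nat \<Rightarrow> real" where
  "bern n = (if n = 0 then 1 else
     - fact n * (\<Sum>k\<in>{..<n}. (if k < n then bern k else 0) / (fact k * fact (n + 1 - k))))"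

text \<open>Bt t = B_k * prod_i B_{tau_i} and tfact t = k! * prod_i tau_i!, with k = length (args t).
  argsB / argsF compute the products over the spine arguments args t.\<close>
fun Bt :: "nam \<Rightarrow> real" and argsB :: "nam \<Rightarrow> real" where
  "Bt X = 1"
| "Bt (Mul a b) = bern (length (args (Mul a b))) * argsB (Mul a b)"
| "argsB X = 1"
| "argsB (Mul a b) = argsB a * Bt b"

fun tfact :: "nam \<Rightarrow> nat" and argsF :: "nam \<Rightarrow> nat" where
  "tfact X = 1"
| "tfact (Mul a b) = fact (length (args (Mul a b))) * argsF (Mul a b)"
| "argsF X = 1"
| "argsF (Mul a b) = argsF a * tfact b"

lemma argsB_eq: "argsB t = (\<Prod>s\<leftarrow>args t. Bt s)"
  by (induction t) auto

lemma argsF_eq: "argsF t = (\<Prod>s\<leftarrow>args t. tfact s)"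
  by (induction t) auto

end

theory Submission
  imports Defs "HOL-Computational_Algebra.Formal_Power_Series"
begin

(* Let F be the generating series whose n-th coefficient is the sum of
   B_tau / tau! over all monomials tau of degree n.  Every monomial other than x is
   uniquely (...((x tau_1) tau_2)...) tau_k, and its weight B_tau / tau! factors as
   (B_k / k!) times the product of the weights of the tau_i.  Grouping monomials by
   the length k of this "spine", the monomials with spine length k contribute
   X * F^k, so F satisfies the functional equation  F = X * Bg(F),  where
   Bg = sum B_k z^k / k! is the Bernoulli series z / (e^z - 1).
   The defining recurrence of the Bernoulli numbers says Bg * (e^z - 1)/z = 1, so
   composing with F gives  e^F - 1 = X, hence F = ln (1 + X), whose n-th coefficient
   is (-1)^(n+1) / n. *)

unbundle fps_syntax

declare bern.simps[simp del]

lemma deg_ge_1: "deg t \<ge> 1"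
  by (induction t) auto

lemma deg_neq_0 [simp]: "deg t \<noteq> 0"
  using deg_ge_1[of t] by linarith

text \<open>The spine of a monomial is strictly shorter than its degree; this bounds the
  grading by spine length.\<close>
lemma length_args_less_deg: "length (args t) < deg t"
  by (induction t) (auto simp: deg_ge_1 less_le_trans)

lemma args_Nil_iff: "args t = [] \<longleftrightarrow> t = X"
  by (cases t) auto

text \<open>There are only finitely many monomials of a given degree, so all sums below
  are genuine finite sums.\<close>
lemma finite_deg: "finite {t. deg t = n}"
proof (induction n rule: less_induct)
  case (less n)
  let ?Prods = "\<Union>i\<in>{1..<n}. case_prod Mul ` ({t. deg t = i} \<times> {t. deg t = n - i})"
  have "{t. deg t = n} \<subseteq> {X} \<union> ?Prods"
  proof
    fix t assume "t \<in> {t. deg t = n}"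
    then show "t \<in> {X} \<union> ?Prods"
    proof (cases t)
      case (Mul a b)
      with \<open>t \<in> _\<close> have "deg a \<in> {1..<n}" "deg b = n - deg a"
        using deg_ge_1[of a] deg_ge_1[of b] by auto
      with Mul show ?thesis by (auto intro!: bexI[of _ "deg a"])
    qed simp
  qed
  moreover have "finite ({X} \<union> ?Prods)"
    using less by auto
  ultimately show ?case
    by (rule finite_subset)
qed

lemma bern_0 [simp]: "bern 0 = 1"
  by (simp add: bern.simps)

lemma tfact_pos: "tfact t > 0" and argsF_pos: "argsF t > 0"
  by (induction t and t rule: tfact_argsF.induct) auto

definition weight :: "nam \<Rightarrow> real" where
  "weight t = Bt t / real (tfact t)"

definition spine_weight :: "nam \<Rightarrow> real" where
  "spine_weight t = argsB t / real (argsF t)"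

lemma spine_weight_X [simp]: "spine_weight X = 1"
  by (simp add: spine_weight_def)

lemma spine_weight_Mul [simp]: "spine_weight (Mul a b) = spine_weight a * weight b"
  by (simp add: weight_def spine_weight_def)

lemma weight_eq: "weight t = bern (length (args t)) / fact (length (args t)) * spine_weight t"
  by (cases t) (auto simp: weight_def spine_weight_def tfact_pos argsF_pos algebra_simps)

definition deg_sum :: "nat \<Rightarrow> real" where
  "deg_sum n = (\<Sum>t\<in>{t. deg t = n}. weight t)"

definition spine_sum :: "nat \<Rightarrow> nat \<Rightarrow> real" where
  "spine_sum k n = (\<Sum>t\<in>{t. deg t = n \<and> length (args t) = k}. spine_weight t)"

lemma deg_sum_0: "deg_sum 0 = 0"
  by (simp add: deg_sum_def)

lemma deg_sum_by_spine: "deg_sum n = (\<Sum>k<n. bern k / fact k * spine_sum k n)"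
proof -
  have "deg_sum n = (\<Sum>k<n. \<Sum>t\<in>{t\<in>{t. deg t = n}. length (args t) = k}. weight t)"
    unfolding deg_sum_def
    by (rule sum.group[symmetric]) (use finite_deg length_args_less_deg in auto)
  also have "\<dots> = (\<Sum>k<n. bern k / fact k * spine_sum k n)"
    unfolding spine_sum_def by (auto simp: weight_eq sum_distrib_left intro!: sum.cong)
  finally show ?thesis .
qed

lemma spine_sum_0: "spine_sum 0 n = (if n = 1 then 1 else 0)"
proof -
  have "{t. deg t = n \<and> length (args t) = 0} = (if n = 1 then {X} else {})"
    by (auto simp: args_Nil_iff)
  then show ?thesis by (simp add: spine_sum_def)
qed

text \<open>Monomials with spine length k+1 are exactly the products Mul a b with a of
  spine length k; hence spine sums obey a convolution recurrence.\<close>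
lemma spine_sum_Suc: "spine_sum (Suc k) n = (\<Sum>i\<le>n. spine_sum k i * deg_sum (n - i))"
proof -
  let ?S = "{p. deg (fst p) + deg (snd p) = n \<and> length (args (fst p)) = k}"
  have img: "{t. deg t = n \<and> length (args t) = Suc k} = case_prod Mul ` ?S"
  proof (rule set_eqI, rule iffI)
    fix t assume "t \<in> {t. deg t = n \<and> length (args t) = Suc k}"
    then show "t \<in> case_prod Mul ` ?S"
      by (cases t) (auto intro!: image_eqI[of _ _ "(a, b)" for a b])
  qed auto
  have inj: "inj_on (case_prod Mul) ?S"
    by (auto simp: inj_on_def)
  have fin: "finite ?S"
  proof (rule finite_subset)
    show "?S \<subseteq> (\<Union>i\<in>{..n}. {t. deg t = i} \<times> {t. deg t = n - i})" by auto
    show "finite (\<Union>i\<in>{..n}. {t. deg t = i} \<times> {t. deg t = n - i})" by (auto intro: finite_deg)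
  qed
  have "spine_sum (Suc k) n = (\<Sum>p\<in>?S. spine_weight (fst p) * weight (snd p))"
    unfolding spine_sum_def img by (subst sum.reindex[OF inj]) (auto intro!: sum.cong)
  also have "\<dots> = (\<Sum>i\<le>n. \<Sum>p\<in>{p\<in>?S. deg (fst p) = i}. spine_weight (fst p) * weight (snd p))"
    by (rule sum.group[symmetric]) (use fin in auto)
  also have "\<dots> = (\<Sum>i\<le>n. spine_sum k i * deg_sum (n - i))"
  proof (rule sum.cong[OF refl])
    fix i assume "i \<in> {..n}"
    then have "{p\<in>?S. deg (fst p) = i}
        = {t. deg t = i \<and> length (args t) = k} \<times> {t. deg t = n - i}"
      by auto
    then show "(\<Sum>p\<in>{p\<in>?S. deg (fst p) = i}. spine_weight (fst p) * weight (snd p))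
        = spine_sum k i * deg_sum (n - i)"
      by (simp add: spine_sum_def deg_sum_def sum_product sum.cartesian_product case_prod_beta)
  qed
  finally show ?thesis .
qed

definition F :: "real fps" where
  "F = Abs_fps deg_sum"

lemma F_nth_0 [simp]: "F $ 0 = 0"
  by (simp add: F_def deg_sum_0)

lemma spine_sum_fps: "spine_sum k n = (fps_X * F ^ k) $ n"
proof (induction k arbitrary: n)
  case 0
  then show ?case by (simp add: spine_sum_0 fps_X_def)
next
  case (Suc k)
  have "(fps_X * F ^ Suc k) $ n = ((fps_X * F ^ k) * F) $ n"
    by (simp add: algebra_simps)
  also have "\<dots> = (\<Sum>i=0..n. spine_sum k i * deg_sum (n - i))"
    by (simp add: fps_mult_nth Suc F_def)
  finally show ?case
    by (simp add: spine_sum_Suc atMost_atLeast0)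
qed

text \<open>Bernoulli_fps = z / (e^z - 1) and exp_quotient_fps = (e^z - 1) / z.\<close>
definition Bernoulli_fps :: "real fps" where
  "Bernoulli_fps = Abs_fps (\<lambda>k. bern k / fact k)"

definition exp_quotient_fps :: "real fps" where
  "exp_quotient_fps = Abs_fps (\<lambda>m. 1 / fact (m + 1))"

lemma X_times_exp_quotient: "fps_X * exp_quotient_fps = fps_exp 1 - 1"
proof (rule fps_ext)
  fix n show "(fps_X * exp_quotient_fps) $ n = (fps_exp 1 - 1) $ n"
    by (cases n) (simp_all add: exp_quotient_fps_def fps_X_mult_nth algebra_simps)
qed

text \<open>The defining recurrence of the Bernoulli numbers, in generating-series form.\<close>
lemma Bernoulli_fps_inverse: "Bernoulli_fps * exp_quotient_fps = 1"
proof (rule fps_ext)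
  fix n
  show "(Bernoulli_fps * exp_quotient_fps) $ n = 1 $ n"
  proof (cases n)
    case 0
    then show ?thesis by (simp add: Bernoulli_fps_def exp_quotient_fps_def fps_mult_nth)
  next
    case (Suc m)
    have rec: "bern n = - fact n * (\<Sum>k<n. bern k / (fact k * fact (n + 1 - k)))"
      using Suc by (subst bern.simps) simp
    have "(Bernoulli_fps * exp_quotient_fps) $ n
        = (\<Sum>i\<le>n. bern i / fact i * (1 / fact (n - i + 1)))"
      by (simp add: Bernoulli_fps_def exp_quotient_fps_def fps_mult_nth atMost_atLeast0)
    also have "\<dots> = (\<Sum>i<n. bern i / (fact i * fact (n + 1 - i))) + bern n / fact n"
      by (simp add: lessThan_Suc_atMost[symmetric] Suc_diff_le)
    also have "\<dots> = 0"
      using rec by (simp add: field_simps)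
    finally show ?thesis using Suc by simp
  qed
qed

lemma F_functional_equation: "F = fps_X * (Bernoulli_fps oo F)"
proof (rule fps_ext)
  fix n
  show "F $ n = (fps_X * (Bernoulli_fps oo F)) $ n"
  proof (cases n)
    case 0
    then show ?thesis by simp
  next
    case (Suc m)
    have "F $ n = (\<Sum>k<Suc m. bern k / fact k * (F ^ k) $ m)"
      by (simp add: F_def deg_sum_by_spine Suc spine_sum_fps fps_X_mult_nth)
    also have "\<dots> = (Bernoulli_fps oo F) $ m"
      by (simp add: fps_compose_nth Bernoulli_fps_def atLeast0AtMost lessThan_Suc_atMost)
    finally show ?thesis by (simp add: Suc fps_X_mult_nth)
  qed
qed

text \<open>Multiplying the functional equation by exp_quotient_fps(F) gives e^F - 1 = X,
  so F is the compositional inverse of e^z - 1, i.e. F = ln (1 + X).\<close>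
lemma F_eq_ln: "F = fps_ln 1"
proof -
  have "F * (exp_quotient_fps oo F) = fps_X * ((Bernoulli_fps * exp_quotient_fps) oo F)"
    by (subst F_functional_equation) (simp add: mult.assoc fps_compose_mult_distrib)
  then have "F * (exp_quotient_fps oo F) = fps_X"
    by (simp add: Bernoulli_fps_inverse)
  then have exp_F: "(fps_exp 1 - 1) oo F = fps_X"
    by (simp add: X_times_exp_quotient[symmetric] fps_compose_mult_distrib)
  have "fps_ln (1::real) = (fps_ln 1 oo (fps_exp 1 - 1)) oo F"
    by (simp add: fps_compose_assoc[symmetric] exp_F)
  also have "\<dots> = F"
    by (simp add: fps_ln_fps_exp_inv fps_inv_fps_exp_compose)
  finally show ?thesis by simp
qed

theorem mainTheorem19:
  fixes n :: nat
  assumes "n \<ge> 1"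
  shows "(\<Sum>\<tau>\<in>{\<tau>. deg \<tau> = n}. Bt \<tau> / real (tfact \<tau>)) = (-1) ^ (n + 1) / real n"
proof -
  obtain m where n: "n = Suc m"
    using assms by (cases n) auto
  have "(\<Sum>\<tau>\<in>{\<tau>. deg \<tau> = n}. Bt \<tau> / real (tfact \<tau>)) = F $ n"
    by (simp add: F_def deg_sum_def weight_def)
  also have "\<dots> = (-1) ^ (n - 1) / real n"
    using assms by (simp add: F_eq_ln fps_ln_nth)
  finally show ?thesis
    by (simp add: n)
qed

end
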